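(* For $2\le n\le l\le\infty$, the quotient morphism of dg algebras $\Phi_{l,n}\colon\mathcal C_l\to\mathcal C_n$ is a quasi-isomorphism, i.e. it induces an isomorphism on cohomology with respect to $\delta_0$ in every bidegree.
   Context: $R$ is a commutative unital ring. $\mathcal C_\infty=R\langle d_1,d_2,\dots\rangle$ is the free bigraded associative unital $R$-algebra on generators $d_i$ ($i\ge1$) of bidegree $(-i,1-i)$. For $k\ge1$ let $S_k=\sum_{i+j=k,\ i,j\ge1}(-1)^{i+1}d_id_j$ (so $S_1=0$). $\delta_0$ is the unique derivation of bidegree $(0,1)$ with $\delta_0(d_i)=S_i$ for all $i\ge1$, satisfying the graded Leibniz rule $\delta_0(xy)=\delta_0(x)y+(-1)^{x_2}x\delta_0(y)$ for $x$ of bidegree $(x_1,x_2)$; it satisfies $\delta_0^2=0$. For $n\ge1$, $I_n$ is the two-sided ideal generated by $S_k$ and $d_k$ for all $k\ge n$ (it is $\delta_0$-stable), $I_\infty=0$, and $\mathcal C_n=(\mathcal C_\infty/I_n,\delta_0)$. For $1\le n\le l\le\infty$, $I_l\subseteq I_n$ and $\Phi_{l,n}\colon\mathcal C_l\to\mathcal C_n$ is the induced surjection. *)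

theory Defs
  imports Main "HOL-Library.Extended_Nat"
begin

text \<open>Elements of the free algebra C_infinity = R<d_1,d_2,...> are represented as
  coefficient functions on words; a word is a list of generator indices
  (the list [i1,...,ik] stands for the monomial d_i1 ... d_ik).\<close>

type_synonym 'r fa = "nat list \<Rightarrow> 'r"

definition Cinf :: "('r::comm_ring_1) fa set" where
  "Cinf = {x. finite {w. x w \<noteq> 0} \<and> (\<forall>w. x w \<noteq> 0 \<longrightarrow> 0 \<notin> set w)}"

definition fzero :: "('r::comm_ring_1) fa" where
  "fzero = (\<lambda>_. 0)"

definition fadd :: "('r::comm_ring_1) fa \<Rightarrow> 'r fa \<Rightarrow> 'r fa" where
  "fadd x y = (\<lambda>w. x w + y w)"

definition fdiff :: "('r::comm_ring_1) fa \<Rightarrow> 'r fa \<Rightarrow> 'r fa" where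
  "fdiff x y = (\<lambda>w. x w - y w)"

definition fmult :: "('r::comm_ring_1) fa \<Rightarrow> 'r fa \<Rightarrow> 'r fa" where
  "fmult x y = (\<lambda>w. \<Sum>k\<le>length w. x (take k w) * y (drop k w))"

text \<open>Bidegree of a monomial: d_i has bidegree (-i, 1-i).\<close>
definition bideg :: "nat list \<Rightarrow> int \<times> int" where
  "bideg w = (- int (sum_list w), int (length w) - int (sum_list w))"

definition hom :: "int \<Rightarrow> int \<Rightarrow> ('r::comm_ring_1) fa set" where
  "hom p q = {x \<in> Cinf. \<forall>w. x w \<noteq> 0 \<longrightarrow> bideg w = (p, q)}"

definition dgen :: "nat \<Rightarrow> ('r::comm_ring_1) fa" where
  "dgen k = (\<lambda>w. if w = [k] then 1 else 0)"

definition Sel :: "nat \<Rightarrow> ('r::comm_ring_1) fa" where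
  "Sel k = (\<lambda>w. \<Sum>i\<in>{1..<k}. if w = [i, k - i] then (-1) ^ (i + 1) else 0)"

text \<open>delta_0 applied to a monomial u = d_{u!0} ... d_{u!(m-1)}, via the graded Leibniz rule:
  delta_0(u) = sum_j (-1)^(second degree of the prefix) prefix * S_{u!j} * suffix,
  where the second degree of d_i is 1 - i (same parity as 1 + i).\<close>
definition delta_word :: "nat list \<Rightarrow> ('r::comm_ring_1) fa" where
  "delta_word u = (\<lambda>w. \<Sum>j<length u. \<Sum>a\<in>{1..<u!j}.
      if w = take j u @ [a, u!j - a] @ drop (Suc j) u
      then (-1) ^ (\<Sum>m<j. Suc (u!m)) * (-1) ^ (a + 1) else 0)"

definition delta0 :: "('r::comm_ring_1) fa \<Rightarrow> 'r fa" where
  "delta0 x = (\<lambda>w. \<Sum>u\<in>{u. x u \<noteq> 0}. x u * delta_word u w)"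

inductive_set ideal_of :: "('r::comm_ring_1) fa set \<Rightarrow> 'r fa set" for G where
  ideal_zero: "fzero \<in> ideal_of G"
| ideal_gen: "g \<in> G \<Longrightarrow> g \<in> ideal_of G"
| ideal_add: "x \<in> ideal_of G \<Longrightarrow> y \<in> ideal_of G \<Longrightarrow> fadd x y \<in> ideal_of G"
| ideal_lmult: "x \<in> ideal_of G \<Longrightarrow> a \<in> Cinf \<Longrightarrow> fmult a x \<in> ideal_of G"
| ideal_rmult: "x \<in> ideal_of G \<Longrightarrow> a \<in> Cinf \<Longrightarrow> fmult x a \<in> ideal_of G"

definition Iset :: "enat \<Rightarrow> ('r::comm_ring_1) fa set" where
  "Iset n = (if n = \<infinity> then {fzero}
     else ideal_of ({Sel k | k. the_enat n \<le> k} \<union> {dgen k | k. the_enat n \<le> k}))"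

text \<open>Cohomology of C_n = (C_infinity / I_n, delta_0) in bidegree (p,q); classes of
  C_n are represented by elements of C_infinity (I_n is homogeneous).\<close>
definition Zc :: "enat \<Rightarrow> int \<Rightarrow> int \<Rightarrow> ('r::comm_ring_1) fa set" where
  "Zc n p q = {x \<in> hom p q. delta0 x \<in> Iset n}"

definition cohom_rel :: "enat \<Rightarrow> int \<Rightarrow> int \<Rightarrow> (('r::comm_ring_1) fa \<times> 'r fa) set" where
  "cohom_rel n p q = {(x, y). x \<in> Zc n p q \<and> y \<in> Zc n p q \<and>
      (\<exists>u \<in> hom p (q - 1). fdiff (fdiff x y) (delta0 u) \<in> Iset n)}"

definition Hcoh :: "enat \<Rightarrow> int \<Rightarrow> int \<Rightarrow> ('r::comm_ring_1) fa set set" where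
  "Hcoh n p q = Zc n p q // cohom_rel n p q"

text \<open>Map on cohomology induced by Phi_{l,n}: the class [x]_l goes to [x]_n.\<close>
definition Hmap :: "enat \<Rightarrow> int \<Rightarrow> int \<Rightarrow> ('r::comm_ring_1) fa set \<Rightarrow> 'r fa set" where
  "Hmap n p q c = cohom_rel n p q `` c"

end

theory Submission
  imports Defs
begin

text \<open>
  Let h send the monomial d_1 d_(c-1) v to d_c v (c \<ge> 2) and every monomial not starting with
  d_1 d_j to 0, and let \<pi> keep only the coefficients of 1 and d_1. Then \<delta>h + h\<delta> = id - \<pi>
  on C_\<infinity>. For n \<ge> 2 the ideal I_n is h-stable and its elements, like those of im \<delta>, have
  vanishing coefficients at 1 and d_1. Hence in every C_n with n \<ge> 2 a cocycle x is cohomologous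
  to \<pi>(x), and two cocycles are cohomologous iff their images under \<pi> agree; so all these
  cohomologies are identified with the same space of \<delta>-closed elements \<pi>(x), compatibly
  with \<Phi>_(l,n).
\<close>

text \<open>delta_rec y w is the coefficient of w in \<delta>_0 y, computed from the first letters of w:
  either d_c d_b stems from S_(c+b), or d_c is passed over with the Koszul sign (-1)^(c+1).\<close>
fun delta_rec :: "('r::comm_ring_1) fa \<Rightarrow> nat list \<Rightarrow> 'r" where
  "delta_rec y [] = 0"
| "delta_rec y [c] = 0"
| "delta_rec y (c # b # t) = (if 1 \<le> c \<and> 1 \<le> b then (-1)^(c+1) * y ((c+b) # t) else 0)
     + (-1)^(Suc c) * delta_rec (\<lambda>u. y (c # u)) (b # t)"

lemma delta_rec_add: "delta_rec (\<lambda>w. f w + g w) v = delta_rec f v + delta_rec g v"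
proof (induction v arbitrary: f g)
  case Nil then show ?case by simp
next
  case (Cons c w) then show ?case by (cases w) (auto simp: algebra_simps)
qed

lemma delta_rec_scale: "delta_rec (\<lambda>w. a * f w) v = a * delta_rec f v"
proof (induction v arbitrary: f)
  case Nil then show ?case by simp
next
  case (Cons c w) then show ?case by (cases w) (auto simp: algebra_simps)
qed

lemma delta_rec_zero: "delta_rec (\<lambda>w. 0) v = 0"
  using delta_rec_scale[of 0 "\<lambda>w. 0" v] by simp

lemma delta_rec_sum: "delta_rec (\<lambda>w. \<Sum>u\<in>S. g u w) v = (\<Sum>u\<in>S. delta_rec (g u) v)"
proof (induction v arbitrary: g)
  case Nil then show ?case by simp
next
  case (Cons c w) then show ?case
    by (cases w) (auto simp: algebra_simps sum_distrib_left sum.distrib sum_subtractf sum_negf)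
qed

lemma delta_word_Nil: "delta_word [] w = 0"
  unfolding delta_word_def by simp

lemma delta_word_Cons: "delta_word (c # u) w =
   (\<Sum>a\<in>{1..<c}. if w = a # (c-a) # u then (-1)^(a+1) else 0)
   + (-1)^(Suc c) * (case w of [] \<Rightarrow> 0 | d # w' \<Rightarrow> if d = c then delta_word u w' else 0)"
proof -
  have sign_shift: "(\<Sum>m<Suc j. Suc ((c#u)!m)) = Suc c + (\<Sum>m<j. Suc (u!m))" for j
    by (subst sum.lessThan_Suc_shift) simp
  define F where "F = (\<lambda>j. \<Sum>a\<in>{1..<(c#u)!j}.
      if w = take j (c#u) @ [a, (c#u)!j - a] @ drop (Suc j) (c#u)
      then (-1::'a) ^ (\<Sum>m<j. Suc ((c#u)!m)) * (-1) ^ (a + 1) else 0)"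
  have "delta_word (c # u) w = (\<Sum>j<Suc (length u). F j)"
    unfolding delta_word_def F_def by simp
  also have "\<dots> = F 0 + (\<Sum>j<length u. F (Suc j))"
    by (rule sum.lessThan_Suc_shift)
  also have "F 0 = (\<Sum>a\<in>{1..<c}. if w = a # (c-a) # u then (-1)^(a+1) else 0)"
    unfolding F_def by (simp cong: if_cong)
  also have "(\<lambda>j. F (Suc j)) = (\<lambda>j. \<Sum>a\<in>{1..<u!j}.
      if w = c # (take j u @ [a, u!j - a] @ drop (Suc j) u)
      then (-1)^(Suc c) * ((-1) ^ (\<Sum>m<j. Suc (u!m)) * (-1) ^ (a + 1)) else 0)"
    unfolding F_def by (simp only: sign_shift, rule ext, rule sum.cong) (auto simp: power_add)
  also have "(\<Sum>j<length u. \<Sum>a\<in>{1..<u!j}.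
      if w = c # (take j u @ [a, u!j - a] @ drop (Suc j) u)
      then (-1)^(Suc c) * ((-1) ^ (\<Sum>m<j. Suc (u!m)) * (-1) ^ (a + 1)) else (0::'a))
     = (-1)^(Suc c) * (case w of [] \<Rightarrow> 0 | d # w' \<Rightarrow> if d = c then delta_word u w' else 0)"
    unfolding delta_word_def
    by (cases w) (auto simp: sum_distrib_left if_distrib cong: if_cong)
  finally show ?thesis .
qed

lemma delta_word_at_Nil: "delta_word u [] = 0"
  by (cases u) (simp_all add: delta_word_Cons delta_word_Nil)

lemma delta_word_at_single: "delta_word u [c] = 0"
  by (cases u) (simp_all add: delta_word_Cons delta_word_Nil delta_word_at_Nil)

definition basis :: "nat list \<Rightarrow> ('r::comm_ring_1) fa" where
  "basis u = (\<lambda>v. if v = u then 1 else 0)"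

lemma sum_if_eq_and:
  "finite A \<Longrightarrow> (\<Sum>i\<in>A. if i = c \<and> P i then f i else 0) = (if c \<in> A \<and> P c then f c else 0)"
proof -
  assume "finite A"
  have "(\<Sum>i\<in>A. if i = c \<and> P i then f i else 0) = (\<Sum>i\<in>A. if i = c then (if P c then f c else 0) else 0)"
    by (rule sum.cong) auto
  also have "\<dots> = (if c \<in> A \<and> P c then f c else 0)"
    using \<open>finite A\<close> by (simp add: sum.delta)
  finally show ?thesis .
qed

lemma delta_rec_basis: "delta_rec (basis u) w = (delta_word u w :: 'r::comm_ring_1)"
proof (induction w arbitrary: u)
  case Nil then show ?case by (simp add: delta_word_at_Nil)
next
  case (Cons c w)
  show ?case
  proof (cases w)
    case Nil then show ?thesis by (simp add: delta_word_at_single)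
  next
    case (Cons b t)
    show ?thesis
    proof (cases u)
      case Nil
      have "(\<lambda>v. basis [] (c # v)) = (\<lambda>v. 0::'r)" by (auto simp: basis_def)
      then show ?thesis using Nil Cons by (simp add: delta_word_Nil delta_rec_zero basis_def)
    next
      case (Cons c' u')
      have tail: "(\<lambda>v. basis (c' # u') (c # v)) = (if c = c' then basis u' else (\<lambda>v. 0::'r))"
        by (auto simp: basis_def)
      have IH: "delta_rec (\<lambda>v. basis (c' # u') (c # v)) (b # t)
          = (if c = c' then delta_word u' (b # t) else (0::'r))"
        unfolding tail using Cons.IH \<open>w = b # t\<close> by (simp add: delta_rec_zero)
      have split: "(\<Sum>a\<in>{1..<c'}. if c # b # t = a # (c'-a) # u' then (-1)^(a+1) else (0::'r))
          = (\<Sum>a\<in>{1..<c'}. if a = c \<and> (b = c' - a \<and> t = u') then (-1)^(a+1) else 0)"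
        by (rule sum.cong) auto
      have merge: "(if 1 \<le> c \<and> 1 \<le> b then (-1)^(c+1) * basis (c' # u') ((c+b) # t) else (0::'r))
          = (if c \<in> {1..<c'} \<and> (b = c' - c \<and> t = u') then (-1)^(c+1) else 0)"
        by (auto simp: basis_def)
      show ?thesis
        using \<open>w = b # t\<close> Cons
        by (simp only: delta_rec.simps IH delta_word_Cons split sum_if_eq_and
            finite_atLeastLessThan merge) simp
    qed
  qed
qed

lemma delta0_eq_delta_rec: assumes "x \<in> Cinf" shows "delta0 x = delta_rec x"
proof
  fix w
  let ?S = "{u. x u \<noteq> 0}"
  have fin: "finite ?S" using assms by (simp add: Cinf_def)
  have expand: "(\<lambda>v. \<Sum>u\<in>?S. x u * basis u v) = x"
  proof
    fix v
    have "(\<Sum>u\<in>?S. x u * basis u v) = (\<Sum>u\<in>?S. if v = u then x u else 0)"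
      by (rule sum.cong) (auto simp: basis_def)
    also have "\<dots> = x v" using fin by (simp add: sum.delta')
    finally show "(\<Sum>u\<in>?S. x u * basis u v) = x v" .
  qed
  have "delta0 x w = (\<Sum>u\<in>?S. x u * delta_rec (basis u) w)"
    unfolding delta0_def by (simp add: delta_rec_basis)
  also have "\<dots> = delta_rec (\<lambda>v. \<Sum>u\<in>?S. x u * basis u v) w"
    by (simp add: delta_rec_scale delta_rec_sum)
  also have "\<dots> = delta_rec x w" by (simp only: expand)
  finally show "delta0 x w = delta_rec x w" .
qed

lemma Cinf_zero_letter: "x \<in> Cinf \<Longrightarrow> 0 \<in> set w \<Longrightarrow> x w = 0"
  unfolding Cinf_def by blast

lemma Cinf_subsupport: assumes "x \<in> Cinf" "\<And>w. y w \<noteq> 0 \<Longrightarrow> x w \<noteq> 0" shows "y \<in> Cinf"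
proof -
  have "{w. y w \<noteq> 0} \<subseteq> {w. x w \<noteq> 0}" using assms(2) by blast
  then have "finite {w. y w \<noteq> 0}" using assms(1) finite_subset unfolding Cinf_def by blast
  then show ?thesis using assms unfolding Cinf_def by blast
qed

lemma Cinf_fzero: "fzero \<in> Cinf"
  by (simp add: Cinf_def fzero_def)

lemma Cinf_fadd: assumes "x \<in> Cinf" "y \<in> Cinf" shows "fadd x y \<in> Cinf"
proof -
  have "{w. fadd x y w \<noteq> 0} \<subseteq> {w. x w \<noteq> 0} \<union> {w. y w \<noteq> 0}" by (auto simp: fadd_def)
  then show ?thesis using assms unfolding Cinf_def by (auto intro: finite_subset simp: fadd_def)
qed

lemma Cinf_const: "(\<lambda>w. if w = [] then c else 0) \<in> Cinf"
proof -
  have "{w. (if w = [] then c else 0) \<noteq> 0} \<subseteq> {[]}" by auto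
  then have "finite {w. (if w = [] then c else 0) \<noteq> 0}" by (rule finite_subset) simp
  then show ?thesis by (simp add: Cinf_def)
qed

lemma Cinf_dgen: "dgen k \<in> Cinf" if "1 \<le> k"
proof -
  have "{w. dgen k w \<noteq> (0::'a)} \<subseteq> {[k]}" by (auto simp: dgen_def)
  then have "finite {w. dgen k w \<noteq> (0::'a)}" by (rule finite_subset) simp
  then show ?thesis using that by (auto simp: Cinf_def dgen_def)
qed

lemma Cinf_support_image:
  assumes "x \<in> Cinf"
    and "\<And>w. y w \<noteq> 0 \<Longrightarrow> \<exists>u. x u \<noteq> 0 \<and> w = f u \<and> (0 \<notin> set u \<longrightarrow> 0 \<notin> set w)"
  shows "y \<in> Cinf"
proof -
  have "{w. y w \<noteq> 0} \<subseteq> f ` {w. x w \<noteq> 0}" using assms(2) by blast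
  moreover have "finite {w. x w \<noteq> 0}" using assms(1) by (simp add: Cinf_def)
  ultimately have "finite {w. y w \<noteq> 0}" by (meson finite_imageI finite_subset)
  moreover have "0 \<notin> set w" if "y w \<noteq> 0" for w
    using assms that unfolding Cinf_def by blast
  ultimately show ?thesis by (simp add: Cinf_def)
qed

lemma hom_Cinf: "x \<in> hom p q \<Longrightarrow> x \<in> Cinf"
  by (simp add: hom_def)

lemma hom_subsupport: assumes "x \<in> hom p q" "\<And>w. y w \<noteq> 0 \<Longrightarrow> x w \<noteq> 0" shows "y \<in> hom p q"
  using assms Cinf_subsupport unfolding hom_def by blast

lemma hom_scale: "x \<in> hom p q \<Longrightarrow> (\<lambda>w. a * x w) \<in> hom p q"
  by (erule hom_subsupport) auto

lemma hom_fzero: "fzero \<in> hom p q"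
  unfolding hom_def using Cinf_fzero by (simp add: fzero_def)

lemma hom_fadd: assumes "x \<in> hom p q" "y \<in> hom p q" shows "fadd x y \<in> hom p q"
proof -
  have "fadd x y \<in> Cinf" using assms Cinf_fadd unfolding hom_def by blast
  moreover have "bideg w = (p, q)" if "fadd x y w \<noteq> 0" for w
  proof -
    have "x w \<noteq> 0 \<or> y w \<noteq> 0" using that by (auto simp: fadd_def)
    then show ?thesis using assms unfolding hom_def by blast
  qed
  ultimately show ?thesis unfolding hom_def by blast
qed

lemma delta0_fzero: "delta0 fzero = fzero"
  by (simp add: delta0_def fzero_def)

lemma delta0_scale:
  assumes "x \<in> Cinf" shows "delta0 (\<lambda>w. a * x w) = (\<lambda>w. a * delta0 x w)"
proof -
  have "(\<lambda>w. a * x w) \<in> Cinf" using assms by (rule Cinf_subsupport) auto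
  then show ?thesis using assms by (simp add: delta0_eq_delta_rec delta_rec_scale fun_eq_iff)
qed

lemma delta0_fadd:
  assumes "x \<in> Cinf" "y \<in> Cinf" shows "delta0 (fadd x y) = fadd (delta0 x) (delta0 y)"
proof -
  have "fadd x y \<in> Cinf" using assms by (rule Cinf_fadd)
  then show ?thesis using assms
    by (simp only: delta0_eq_delta_rec) (simp add: fadd_def fun_eq_iff delta_rec_add)
qed

subsection \<open>The contracting homotopy\<close>

definition contract :: "('r::comm_ring_1) fa \<Rightarrow> 'r fa" where
  "contract x = (\<lambda>w. case w of [] \<Rightarrow> 0 | c # v \<Rightarrow> if 2 \<le> c then x (1 # (c - 1) # v) else 0)"

definition raise :: "('r::comm_ring_1) fa \<Rightarrow> 'r fa" where
  "raise x = (\<lambda>w. case w of [] \<Rightarrow> 0 | c # v \<Rightarrow> if 2 \<le> c then x ((c - 1) # v) else 0)"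

definition low_part :: "('r::comm_ring_1) fa \<Rightarrow> 'r fa" where
  "low_part x = (\<lambda>w. if w = [] \<or> w = [1] then x w else 0)"

lemma contract_simps [simp]:
  "contract x [] = 0" "contract x (c # v) = (if 2 \<le> c then x (1 # (c - 1) # v) else 0)"
  by (simp_all add: contract_def)

lemma raise_simps [simp]:
  "raise x [] = 0" "raise x (c # v) = (if 2 \<le> c then x ((c - 1) # v) else 0)"
  by (simp_all add: raise_def)

lemma delta_rec_contract_homotopy:
  fixes x :: "('r::comm_ring_1) fa"
  assumes no_zero_letter: "\<And>w. 0 \<in> set w \<Longrightarrow> x w = 0"
  shows "delta_rec (contract x) w + contract (delta_rec x) w = x w - low_part x w"
proof (cases w)
  case Nil then show ?thesis by (simp add: low_part_def)
next
  case (Cons c v)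
  show ?thesis
  proof (cases "2 \<le> c")
    case True
    then obtain k where k: "c = Suc (Suc k)" by (metis add_2_eq_Suc le_Suc_ex)
    have "(\<lambda>u. contract x (c # u)) = (\<lambda>u. x (1 # Suc k # u))" using k by auto
    then show ?thesis using Cons k by (cases v) (simp_all add: low_part_def algebra_simps)
  next
    case False
    then have "c = 0 \<or> c = 1" by auto
    moreover have "(\<lambda>u. contract x (c # u)) = (\<lambda>u. 0)" using False by auto
    ultimately show ?thesis using Cons no_zero_letter[of w]
      by (cases v; cases "hd v = 0") (auto simp: delta_rec_zero low_part_def)
  qed
qed

lemma delta_rec_low_supported:
  "(\<And>v. v \<noteq> [] \<Longrightarrow> v \<noteq> [1] \<Longrightarrow> y v = 0) \<Longrightarrow> delta_rec y w = 0"
proof (induction w arbitrary: y)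
  case Nil then show ?case by simp
next
  case (Cons c w)
  show ?case
  proof (cases w)
    case Nil then show ?thesis by simp
  next
    case (Cons b t)
    have "delta_rec (\<lambda>u. y (c # u)) (b # t) = 0"
      by (rule Cons.IH[unfolded \<open>w = b # t\<close>]) (simp add: Cons.prems)
    moreover have "1 \<le> c \<and> 1 \<le> b \<Longrightarrow> y ((c+b) # t) = 0" by (rule Cons.prems) auto
    ultimately show ?thesis using Cons by simp
  qed
qed

lemma Cinf_contract: assumes "x \<in> Cinf" shows "contract x \<in> Cinf"
proof (rule Cinf_support_image[OF assms,
      where f = "\<lambda>u. case u of a # b # v \<Rightarrow> Suc b # v | _ \<Rightarrow> []"])
  fix w assume "contract x w \<noteq> 0"
  then obtain c v where "w = c # v" "2 \<le> c" "x (1 # (c-1) # v) \<noteq> 0"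
    by (cases w) (auto split: if_splits)
  then show "\<exists>u. x u \<noteq> 0 \<and> w = (case u of a # b # v \<Rightarrow> Suc b # v | _ \<Rightarrow> [])
      \<and> (0 \<notin> set u \<longrightarrow> 0 \<notin> set w)"
    by (intro exI[of _ "1 # (c-1) # v"]) auto
qed

lemma Cinf_raise: assumes "x \<in> Cinf" shows "raise x \<in> Cinf"
proof (rule Cinf_support_image[OF assms,
      where f = "\<lambda>u. case u of a # v \<Rightarrow> Suc a # v | _ \<Rightarrow> []"])
  fix w assume "raise x w \<noteq> 0"
  then obtain c v where "w = c # v" "2 \<le> c" "x ((c-1) # v) \<noteq> 0"
    by (cases w) (auto split: if_splits)
  then show "\<exists>u. x u \<noteq> 0 \<and> w = (case u of a # v \<Rightarrow> Suc a # v | _ \<Rightarrow> [])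
      \<and> (0 \<notin> set u \<longrightarrow> 0 \<notin> set w)"
    by (intro exI[of _ "(c-1) # v"]) auto
qed

lemma Cinf_low_part: "x \<in> Cinf \<Longrightarrow> low_part x \<in> Cinf"
  by (erule Cinf_subsupport) (auto simp: low_part_def split: if_splits)

lemma hom_low_part: "x \<in> hom p q \<Longrightarrow> low_part x \<in> hom p q"
  by (erule hom_subsupport) (auto simp: low_part_def split: if_splits)

lemma hom_contract: assumes "x \<in> hom p q" shows "contract x \<in> hom p (q - 1)"
proof -
  have "contract x \<in> Cinf" using assms Cinf_contract by (auto simp: hom_def)
  moreover have "bideg w = (p, q - 1)" if nz: "contract x w \<noteq> 0" for w
  proof -
    obtain c v where w: "w = c # v" "2 \<le> c" "x (1 # (c-1) # v) \<noteq> 0"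
      using nz by (cases w) (auto split: if_splits)
    then have "bideg (1 # (c-1) # v) = (p, q)" using assms by (auto simp: hom_def)
    then show ?thesis using w(1,2) by (simp add: bideg_def)
  qed
  ultimately show ?thesis by (simp add: hom_def)
qed

lemma fmult_Nil: "fmult a x [] = a [] * x []"
  by (simp add: fmult_def)

lemma fmult_Cons:
  "fmult a x (c # v) = a [] * x (c # v) + (\<Sum>i\<le>length v. a (c # take i v) * x (drop i v))"
  unfolding fmult_def by (simp add: sum.atMost_shift lessThan_Suc_atMost del: sum.atMost_Suc)

lemma fmult_single: "fmult a x [c] = a [] * x [c] + a [c] * x []"
  by (simp add: fmult_Cons)

lemma fmult_const: "fmult (\<lambda>w. if w = [] then c else 0) y = (\<lambda>w. c * y w)"
proof
  fix w show "fmult (\<lambda>w. if w = [] then c else 0) y w = c * y w"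
    by (cases w) (simp_all add: fmult_Nil fmult_Cons)
qed

lemma contract_fmult:
  "contract (fmult a x) =
     fadd (fadd (fmult (contract a) x) (\<lambda>w. a [] * contract x w)) (\<lambda>w. a [1] * raise x w)"
proof
  fix w
  show "contract (fmult a x) w =
      fadd (fadd (fmult (contract a) x) (\<lambda>w. a [] * contract x w)) (\<lambda>w. a [1] * raise x w) w"
  proof (cases w)
    case Nil then show ?thesis by (simp add: fadd_def fmult_Nil)
  next
    case (Cons c v)
    show ?thesis
    proof (cases "2 \<le> c")
      case True
      have "fmult a x (1 # (c - 1) # v) = a [] * x (1 # (c-1) # v) + a [1] * x ((c-1) # v)
           + (\<Sum>i<Suc (length v). a (1 # (c-1) # take i v) * x (drop i v))"
        by (simp add: fmult_Cons sum.atMost_shift del: sum.atMost_Suc sum.lessThan_Suc)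
      then show ?thesis using Cons True
        by (simp add: fadd_def fmult_Cons lessThan_Suc_atMost algebra_simps)
    next
      case False
      then show ?thesis using Cons by (simp add: fadd_def fmult_Cons)
    qed
  qed
qed

lemma raise_fmult: "raise (fmult a x) = fadd (fmult (raise a) x) (\<lambda>w. a [] * raise x w)"
proof
  fix w
  show "raise (fmult a x) w = fadd (fmult (raise a) x) (\<lambda>w. a [] * raise x w) w"
    by (cases w) (auto simp: fadd_def fmult_Nil fmult_Cons algebra_simps)
qed

lemma fmult_dgen:
  "fmult (dgen a) x = (\<lambda>w. case w of [] \<Rightarrow> 0 | c # v \<Rightarrow> if c = a then x v else 0)"
proof
  fix w
  show "fmult (dgen a) x w = (case w of [] \<Rightarrow> 0 | c # v \<Rightarrow> if c = a then x v else 0)"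
  proof (cases w)
    case Nil then show ?thesis by (simp add: fmult_Nil dgen_def)
  next
    case (Cons c v)
    have "(\<Sum>i\<le>length v. dgen a (c # take i v) * x (drop i v)) = (if c = a then x v else 0)"
      by (cases v) (simp_all add: sum.atMost_shift dgen_def del: sum.atMost_Suc sum.lessThan_Suc)
    then show ?thesis using Cons by (simp add: fmult_Cons dgen_def)
  qed
qed

lemma Sel_Nil: "Sel k [] = 0"
  by (simp add: Sel_def)

lemma Sel_Cons: "Sel k (c # v) = (if c \<in> {1..<k} \<and> v = [k - c] then (-1)^(c+1) else 0)"
proof -
  have "Sel k (c # v) = (\<Sum>i\<in>{1..<k}. if i = c \<and> v = [k - i] then (-1)^(i+1) else 0)"
    unfolding Sel_def by (rule sum.cong) auto
  then show ?thesis by (simp add: sum_if_eq_and)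
qed

lemma contract_dgen: "contract (dgen k) = fzero"
  by (rule ext, case_tac x) (auto simp: dgen_def fzero_def)

lemma raise_dgen: "1 \<le> k \<Longrightarrow> raise (dgen k) = dgen (Suc k)"
  by (rule ext, case_tac x) (auto simp: dgen_def)

lemma contract_Sel: "2 \<le> k \<Longrightarrow> contract (Sel k) = dgen k"
  by (rule ext, case_tac x) (auto simp: dgen_def Sel_Cons Sel_Nil)

lemma raise_Sel:
  assumes "1 \<le> k" shows "raise (Sel k) = fdiff (fmult (dgen 1) (dgen k)) (Sel (Suc k))"
proof
  fix w
  show "raise (Sel k) w = fdiff (fmult (dgen 1) (dgen k)) (Sel (Suc k)) w"
  proof (cases w)
    case Nil then show ?thesis by (simp add: fdiff_def fmult_dgen Sel_Nil)
  next
    case (Cons c v)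
    then show ?thesis unfolding fdiff_def fmult_dgen using assms
      by (cases "2 \<le> c") (auto simp: Sel_Cons dgen_def)
  qed
qed

lemma contract_fzero: "contract fzero = fzero"
  by (rule ext, case_tac x) (auto simp: fzero_def)

lemma raise_fzero: "raise fzero = fzero"
  by (rule ext, case_tac x) (auto simp: fzero_def)

lemma contract_fadd: "contract (fadd x y) = fadd (contract x) (contract y)"
  by (rule ext, case_tac xa) (auto simp: fadd_def)

lemma raise_fadd: "raise (fadd x y) = fadd (raise x) (raise y)"
  by (rule ext, case_tac xa) (auto simp: fadd_def)

subsection \<open>The ideals I_n\<close>

lemma ideal_of_scale: "x \<in> ideal_of G \<Longrightarrow> (\<lambda>w. c * x w) \<in> ideal_of G"
  using ideal_lmult[OF _ Cinf_const, of x G c] by (simp add: fmult_const)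

lemma ideal_of_fdiff: assumes "x \<in> ideal_of G" "y \<in> ideal_of G" shows "fdiff x y \<in> ideal_of G"
proof -
  have "fdiff x y = fadd x (\<lambda>w. (-1) * y w)" by (simp add: fdiff_def fadd_def fun_eq_iff)
  then show ?thesis using ideal_add[OF assms(1) ideal_of_scale[OF assms(2), of "-1"]] by simp
qed

lemma ideal_of_mono: "x \<in> ideal_of G \<Longrightarrow> G \<subseteq> H \<Longrightarrow> x \<in> ideal_of H"
  by (induction rule: ideal_of.induct) (auto intro: ideal_of.intros)

definition ideal_gens :: "nat \<Rightarrow> ('r::comm_ring_1) fa set" where
  "ideal_gens N = {Sel k | k. N \<le> k} \<union> {dgen k | k. N \<le> k}"

text \<open>raise is carried along because it appears in the product rule for contract. The bound
  N \<ge> 2 is needed since d_1 \<in> I_1 has a nonzero coefficient at [1].\<close>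
lemma ideal_gens_invariants:
  assumes N: "2 \<le> N" and x: "x \<in> ideal_of (ideal_gens N)"
  shows "x [] = 0 \<and> x [1] = 0 \<and> contract x \<in> ideal_of (ideal_gens N)
    \<and> raise x \<in> ideal_of (ideal_gens N)"
  using x
proof induction
  case ideal_zero
  then show ?case
    by (simp add: contract_fzero raise_fzero ideal_of.ideal_zero) (simp add: fzero_def)
next
  case (ideal_gen g)
  then obtain k where k: "N \<le> k" "g = Sel k \<or> g = dgen k" by (auto simp: ideal_gens_def)
  have gens: "dgen k \<in> ideal_of (ideal_gens N)" "Sel (Suc k) \<in> ideal_of (ideal_gens N)"
    "dgen (Suc k) \<in> ideal_of (ideal_gens N)"
    using k(1) by (auto simp: ideal_gens_def intro!: ideal_of.ideal_gen)
  have "2 \<le> k" using N k(1) by simp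
  from k(2) show ?case
  proof
    assume g: "g = Sel k"
    have "raise (Sel k) \<in> ideal_of (ideal_gens N)"
      using \<open>2 \<le> k\<close> ideal_of_fdiff[OF ideal_lmult[OF gens(1) Cinf_dgen[of 1]] gens(2)]
      by (simp add: raise_Sel)
    then show ?thesis using g gens \<open>2 \<le> k\<close> by (simp add: Sel_Nil Sel_Cons contract_Sel)
  next
    assume g: "g = dgen k"
    then show ?thesis using gens \<open>2 \<le> k\<close>
      by (simp add: contract_dgen raise_dgen ideal_of.ideal_zero) (simp add: dgen_def)
  qed
next
  case (ideal_add x y)
  then show ?case
    by (simp add: contract_fadd raise_fadd ideal_of.ideal_add) (simp add: fadd_def)
next
  case (ideal_lmult x a)
  have "contract (fmult a x) \<in> ideal_of (ideal_gens N)"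
    unfolding contract_fmult using ideal_lmult
    by (intro ideal_of.ideal_add ideal_of_scale ideal_of.ideal_lmult Cinf_contract) auto
  moreover have "raise (fmult a x) \<in> ideal_of (ideal_gens N)"
    unfolding raise_fmult using ideal_lmult
    by (intro ideal_of.ideal_add ideal_of_scale ideal_of.ideal_lmult Cinf_raise) auto
  ultimately show ?case using ideal_lmult by (simp add: fmult_Nil fmult_single)
next
  case (ideal_rmult x a)
  have "contract (fmult x a) = fmult (contract x) a" "raise (fmult x a) = fmult (raise x) a"
    using ideal_rmult by (simp_all add: contract_fmult raise_fmult fadd_def)
  then show ?case
    using ideal_rmult by (simp add: fmult_Nil fmult_single ideal_of.ideal_rmult)
qed

lemma Iset_enat: "Iset (enat N) = ideal_of (ideal_gens N)"
  by (simp add: Iset_def ideal_gens_def)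

lemma Iset_infinity: "Iset \<infinity> = {fzero}"
  by (simp add: Iset_def)

lemma Iset_fzero: "fzero \<in> Iset n"
  by (cases n) (simp_all add: Iset_enat Iset_infinity ideal_of.ideal_zero)

lemma Iset_fadd: "x \<in> Iset n \<Longrightarrow> y \<in> Iset n \<Longrightarrow> fadd x y \<in> Iset n"
proof (cases n)
  case enat
  then show "x \<in> Iset n \<Longrightarrow> y \<in> Iset n \<Longrightarrow> fadd x y \<in> Iset n"
    by (simp add: Iset_enat ideal_of.ideal_add)
qed (simp add: Iset_infinity fadd_def fzero_def)

lemma Iset_scale: "x \<in> Iset n \<Longrightarrow> (\<lambda>w. c * x w) \<in> Iset n"
  by (cases n) (auto simp: Iset_enat Iset_infinity ideal_of_scale fzero_def)

lemma Iset_invariants: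
  assumes "2 \<le> n" "x \<in> Iset n"
  shows "x [] = 0 \<and> x [1] = 0 \<and> contract x \<in> Iset n"
proof (cases n)
  case infinity
  then show ?thesis using assms by (simp add: Iset_infinity contract_fzero) (simp add: fzero_def)
next
  case (enat N)
  then have "2 \<le> N" using assms(1) by (simp add: numeral_le_enat_iff)
  then show ?thesis using ideal_gens_invariants[of N x] assms(2) enat by (simp add: Iset_enat)
qed

lemma Iset_antimono: assumes "n \<le> l" shows "Iset l \<subseteq> Iset n"
proof (cases l)
  case infinity then show ?thesis by (simp add: Iset_infinity Iset_fzero)
next
  case (enat L)
  with assms obtain N where N: "n = enat N" "N \<le> L" by (cases n) auto
  have "ideal_gens L \<subseteq> ideal_gens N" using N(2) by (auto simp: ideal_gens_def)
  then show ?thesis using enat N by (auto simp: Iset_enat intro: ideal_of_mono)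
qed

subsection \<open>Cohomology\<close>

lemma equiv_cohom_rel: "equiv (Zc n p q) (cohom_rel n p q)"
proof (rule equivI)
  show "cohom_rel n p q \<subseteq> Zc n p q \<times> Zc n p q" by (auto simp: cohom_rel_def)
  show "refl_on (Zc n p q) (cohom_rel n p q)"
  proof (rule refl_onI)
    fix x assume "x \<in> Zc n p q"
    moreover have "fdiff (fdiff x x) (delta0 fzero) = fzero"
      by (simp add: delta0_fzero fdiff_def) (simp add: fzero_def)
    ultimately have "x \<in> Zc n p q \<and>
        (\<exists>u\<in>hom p (q - 1). fdiff (fdiff x x) (delta0 u) \<in> Iset n)"
      using hom_fzero Iset_fzero by metis
    then show "(x, x) \<in> cohom_rel n p q" by (simp add: cohom_rel_def)
  qed
  show "sym (cohom_rel n p q)"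
  proof (rule symI)
    fix x y assume "(x, y) \<in> cohom_rel n p q"
    then obtain u where xy: "x \<in> Zc n p q" "y \<in> Zc n p q" "u \<in> hom p (q - 1)"
      "fdiff (fdiff x y) (delta0 u) \<in> Iset n" by (auto simp: cohom_rel_def)
    have "fdiff (fdiff y x) (delta0 (\<lambda>w. (-1) * u w))
        = (\<lambda>w. (-1) * fdiff (fdiff x y) (delta0 u) w)"
      using delta0_scale[OF hom_Cinf[OF xy(3)], of "-1"] by (simp add: fdiff_def fun_eq_iff)
    then have "fdiff (fdiff y x) (delta0 (\<lambda>w. (-1) * u w)) \<in> Iset n"
      using Iset_scale[OF xy(4), of "-1"] by simp
    then show "(y, x) \<in> cohom_rel n p q"
      using xy hom_scale[OF xy(3), of "-1"] by (auto simp: cohom_rel_def)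
  qed
  show "trans (cohom_rel n p q)"
  proof (rule transI)
    fix x y z assume "(x, y) \<in> cohom_rel n p q" "(y, z) \<in> cohom_rel n p q"
    then obtain u v where xy: "x \<in> Zc n p q" "y \<in> Zc n p q" "z \<in> Zc n p q"
      "u \<in> hom p (q - 1)" "fdiff (fdiff x y) (delta0 u) \<in> Iset n"
      "v \<in> hom p (q - 1)" "fdiff (fdiff y z) (delta0 v) \<in> Iset n"
      by (auto simp: cohom_rel_def)
    have "fdiff (fdiff x z) (delta0 (fadd u v)) =
        fadd (fdiff (fdiff x y) (delta0 u)) (fdiff (fdiff y z) (delta0 v))"
      using delta0_fadd[OF hom_Cinf[OF xy(4)] hom_Cinf[OF xy(6)]]
      by (simp add: fdiff_def fadd_def fun_eq_iff)
    then have "fdiff (fdiff x z) (delta0 (fadd u v)) \<in> Iset n"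
      using Iset_fadd[OF xy(5) xy(7)] by simp
    then show "(x, z) \<in> cohom_rel n p q"
      using xy hom_fadd[OF xy(4) xy(6)] by (auto simp: cohom_rel_def)
  qed
qed

lemma low_part_cocycle: "x \<in> hom p q \<Longrightarrow> low_part x \<in> Zc n p q"
proof -
  assume x: "x \<in> hom p q"
  have "delta_rec (low_part x) w = 0" for w
    by (rule delta_rec_low_supported) (simp add: low_part_def)
  then have "delta0 (low_part x) = fzero"
    using delta0_eq_delta_rec[OF Cinf_low_part[OF hom_Cinf[OF x]]] by (simp add: fun_eq_iff fzero_def)
  then show ?thesis using hom_low_part[OF x] Iset_fzero by (simp add: Zc_def)
qed

lemma cohom_rel_low_part:
  assumes "2 \<le> n" "x \<in> Zc n p q"
  shows "(x, low_part x) \<in> cohom_rel n p q"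
proof -
  have xh: "x \<in> hom p q" and dx: "delta0 x \<in> Iset n" using assms(2) by (auto simp: Zc_def)
  have xc: "x \<in> Cinf" using xh by (rule hom_Cinf)
  have "fdiff (fdiff x (low_part x)) (delta0 (contract x)) = contract (delta0 x)"
  proof
    fix w
    have "delta_rec (contract x) w + contract (delta_rec x) w = x w - low_part x w"
      by (rule delta_rec_contract_homotopy) (rule Cinf_zero_letter[OF xc])
    then show "fdiff (fdiff x (low_part x)) (delta0 (contract x)) w = contract (delta0 x) w"
      using delta0_eq_delta_rec[OF xc] delta0_eq_delta_rec[OF Cinf_contract[OF xc]]
      by (simp add: fdiff_def algebra_simps)
  qed
  moreover have "contract (delta0 x) \<in> Iset n" using Iset_invariants[OF assms(1) dx] by simp
  ultimately have "\<exists>u\<in>hom p (q - 1). fdiff (fdiff x (low_part x)) (delta0 u) \<in> Iset n"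
    using hom_contract[OF xh] by metis
  then show ?thesis using assms(2) low_part_cocycle[OF xh] by (simp add: cohom_rel_def)
qed

lemma cohom_rel_low_part_eq:
  assumes "2 \<le> n" "(x, y) \<in> cohom_rel n p q"
  shows "low_part x = low_part y"
proof -
  obtain u where u: "u \<in> hom p (q - 1)" "fdiff (fdiff x y) (delta0 u) \<in> Iset n"
    using assms(2) by (auto simp: cohom_rel_def)
  have "fdiff (fdiff x y) (delta0 u) [] = 0 \<and> fdiff (fdiff x y) (delta0 u) [1] = 0"
    using Iset_invariants[OF assms(1) u(2)] by simp
  then have "x [] = y [] \<and> x [1] = y [1]"
    by (simp add: delta0_eq_delta_rec[OF hom_Cinf[OF u(1)]] fdiff_def)
  then show ?thesis by (auto simp: low_part_def fun_eq_iff)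
qed

lemma cohom_rel_antimono: "n \<le> l \<Longrightarrow> cohom_rel l p q \<subseteq> cohom_rel n p q"
  using Iset_antimono unfolding cohom_rel_def Zc_def by blast

lemma Image_Image_equiv_class:
  assumes "equiv A r" "equiv B s" "r \<subseteq> s" "x \<in> A"
  shows "s `` (r `` {x}) = s `` {x}"
proof
  show "s `` (r `` {x}) \<subseteq> s `` {x}"
    using assms(2,3) by (auto dest: equiv_class_eq simp: subset_eq)
  have "(x, x) \<in> r" using assms(1,4) by (simp add: equiv_def refl_on_def)
  then show "s `` {x} \<subseteq> s `` (r `` {x})" by blast
qed

lemma bij_betw_Image_quotient:
  assumes eqA: "equiv A r" and eqB: "equiv B s" and sub: "r \<subseteq> s"
    and f_B: "\<And>x. x \<in> B \<Longrightarrow> f x \<in> A \<and> (x, f x) \<in> s"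
    and f_A: "\<And>x. x \<in> A \<Longrightarrow> (x, f x) \<in> r"
    and f_s: "\<And>x y. (x, y) \<in> s \<Longrightarrow> f x = f y"
  shows "bij_betw (\<lambda>C. s `` C) (A // r) (B // s)"
proof -
  have img: "s `` (r `` {x}) = s `` {x}" if "x \<in> A" for x
    using Image_Image_equiv_class[OF eqA eqB sub that] .
  have AB: "A \<subseteq> B"
    using eqA eqB sub by (auto simp: equiv_def refl_on_def)
  have inj: "inj_on (\<lambda>C. s `` C) (A // r)"
  proof (rule inj_onI)
    fix C D assume "C \<in> A // r" "D \<in> A // r" and eq: "s `` C = s `` D"
    then obtain x y where x: "x \<in> A" "C = r `` {x}" and y: "y \<in> A" "D = r `` {y}"
      by (auto elim!: quotientE)
    then have "(x, y) \<in> s"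
      using eq eqB AB by (simp add: img eq_equiv_class_iff subset_eq)
    then have "f x = f y" by (rule f_s)
    then show "C = D"
      using f_A[OF x(1)] f_A[OF y(1)] eqA x(2) y(2) by (metis equiv_class_eq)
  qed
  have "(\<lambda>C. s `` C) ` (A // r) = B // s"
  proof
    show "(\<lambda>C. s `` C) ` (A // r) \<subseteq> B // s"
      using AB by (auto simp: img intro!: quotientI elim!: quotientE)
    show "B // s \<subseteq> (\<lambda>C. s `` C) ` (A // r)"
    proof
      fix D assume "D \<in> B // s"
      then obtain x where x: "x \<in> B" "D = s `` {x}" by (rule quotientE)
      then have "D = s `` (r `` {f x})"
        using f_B[OF x(1)] eqB by (simp add: img equiv_class_eq)
      then show "D \<in> (\<lambda>C. s `` C) ` (A // r)"
        using f_B[OF x(1)] by (auto intro: quotientI)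
    qed
  qed
  with inj show ?thesis by (simp add: bij_betw_def)
qed

theorem mainTheorem11:
  fixes n l :: enat and p q :: int
  assumes "2 \<le> n" and "n \<le> l"
  shows "bij_betw (Hmap n p q :: ('r::comm_ring_1) fa set \<Rightarrow> 'r fa set)
           (Hcoh l p q) (Hcoh n p q)"
proof -
  have "2 \<le> l" using assms by (rule order_trans)
  have "bij_betw (\<lambda>C. cohom_rel n p q `` C) (Zc l p q // cohom_rel l p q)
      ((Zc n p q :: 'r fa set) // cohom_rel n p q)"
  proof (rule bij_betw_Image_quotient[where f = low_part])
    show "cohom_rel l p q \<subseteq> cohom_rel n p q" using assms(2) by (rule cohom_rel_antimono)
    show "low_part x \<in> Zc l p q \<and> (x, low_part x) \<in> cohom_rel n p q" if "x \<in> Zc n p q" for x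
      using low_part_cocycle[of x p q l] cohom_rel_low_part[OF assms(1) that] that
      by (simp add: Zc_def)
    show "(x, low_part x) \<in> cohom_rel l p q" if "x \<in> Zc l p q" for x
      using cohom_rel_low_part[OF \<open>2 \<le> l\<close> that] .
    show "low_part x = low_part y" if "(x, y) \<in> cohom_rel n p q" for x y
      using cohom_rel_low_part_eq[OF assms(1) that] .
  qed (rule equiv_cohom_rel)+
  moreover have "(Hmap n p q :: 'r fa set \<Rightarrow> _) = (\<lambda>C. cohom_rel n p q `` C)"
    by (simp add: fun_eq_iff Hmap_def)
  ultimately show ?thesis by (simp add: Hcoh_def)
qed

end
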